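(* Let $q$ be a prime power and $0\le t\le s$. If an invertible $s\times s$ matrix $M$ over $\mathbb{F}_q$ defines a linear $(t,s,q)$-AONT (i.e. every $t\times t$ submatrix of $M$ is invertible), then $M^{-1}$ defines a linear $(s-t,s,q)$-AONT (i.e. every $(s-t)\times(s-t)$ submatrix of $M^{-1}$ is invertible).
   Context: A linear $(t,s,q)$-AONT over $\mathbb{F}_q$ is given by an invertible $s\times s$ matrix $M$ over $\mathbb{F}_q$, the transform being $(y_1,\dots,y_s)=(x_1,\dots,x_s)M^{-1}$; $M$ defines a linear $(t,s,q)$-AONT iff every $t\times t$ submatrix of $M$ is invertible (a $0\times0$ submatrix counts as invertible). *)

theory Defs
  imports "Jordan_Normal_Form.Matrix" "Jordan_Normal_Form.DL_Submatrix"
begin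

text \<open>The field F_q is modelled by a finite field type,
q = CARD('a).\<close>

definition linear_AONT :: "nat \<Rightarrow> nat \<Rightarrow> 'a :: field mat \<Rightarrow> bool" where
  "linear_AONT t s M \<longleftrightarrow> M \<in> carrier_mat s s \<and> invertible_mat M \<and>
     (\<forall>I J. I \<subseteq> {..<s} \<longrightarrow> J \<subseteq> {..<s} \<longrightarrow> card I = t \<longrightarrow> card J = t \<longrightarrow>
        invertible_mat (submatrix M I J))"

end

theory Submission
  imports Defs "Jordan_Normal_Form.Determinant"
begin

(* A kernel form of Jacobi's complementary minor identity, valid over any field.
   Let M N = 1 and |I| = |J|, and write I', J' for the complements. If N_IJ v = 0 with v nonzero,
   spread v over the coordinates J to get x, and put y = N x. Then y vanishes on I, and
   M y = x vanishes on J', so the restriction of y to I' lies in the kernel of M_J'I'; it is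
   nonzero because y is. Hence M_J'I' invertible forces N_IJ invertible, and for N = M^-1 the
   (s - t) x (s - t) submatrix N_IJ is paired in this way with the t x t submatrix M_J'I'. *)

lemma invertible_mat_iff_det_ne_0:
  fixes A :: "'a :: field mat"
  assumes A: "A \<in> carrier_mat n n"
  shows "invertible_mat A \<longleftrightarrow> det A \<noteq> 0"
proof
  assume "invertible_mat A"
  then obtain B where AB: "A * B = 1\<^sub>m n" and BA: "B * A = 1\<^sub>m (dim_row B)"
    using A unfolding invertible_mat_def inverts_mat_def by auto
  have "dim_row B = n" "dim_col B = n"
    using A arg_cong[OF AB, of dim_col] arg_cong[OF BA, of dim_col] by auto
  then have "det A * det B = 1"
    using det_mult[OF A, of B] AB by auto
  then show "det A \<noteq> 0" by auto
next
  assume "det A \<noteq> 0"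
  from det_non_zero_imp_unit[OF A this, of "()"]
  obtain B where "B \<in> carrier_mat n n" "B * A = 1\<^sub>m n" "A * B = 1\<^sub>m n"
    unfolding Units_def ring_mat_def by auto
  then show "invertible_mat A"
    using A unfolding invertible_mat_def inverts_mat_def by auto
qed

lemma invertible_mat_iff_trivial_kernel:
  fixes A :: "'a :: field mat"
  assumes "A \<in> carrier_mat n n"
  shows "invertible_mat A \<longleftrightarrow> (\<forall>v \<in> carrier_vec n. A *\<^sub>v v = 0\<^sub>v n \<longrightarrow> v = 0\<^sub>v n)"
  using invertible_mat_iff_det_ne_0[OF assms] det_0_iff_vec_prod_zero_field[OF assms] by blast

lemma Collect_less_and_mem:
  assumes "I \<subseteq> {..<m}"
  shows "{i. i < m \<and> i \<in> I} = I"
  using assms by auto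

lemma submatrix_carrier_mat:
  assumes "A \<in> carrier_mat m n" "I \<subseteq> {..<m}" "J \<subseteq> {..<n}"
  shows "submatrix A I J \<in> carrier_mat (card I) (card J)"
  unfolding submatrix_def carrier_matD[OF assms(1)]
    Collect_less_and_mem[OF assms(2)] Collect_less_and_mem[OF assms(3)] by simp

lemma submatrix_index_pick:
  assumes "A \<in> carrier_mat m n" "I \<subseteq> {..<m}" "J \<subseteq> {..<n}" "a < card I" "b < card J"
  shows "submatrix A I J $$ (a, b) = A $$ (pick I a, pick J b)"
  using assms(4,5) unfolding submatrix_def carrier_matD[OF assms(1)]
    Collect_less_and_mem[OF assms(2)] Collect_less_and_mem[OF assms(3)] by simp

lemma card_less_in_set_less_card:
  fixes S :: "nat set"
  assumes "finite S" "i \<in> S"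
  shows "card {a \<in> S. a < i} < card S"
  using assms by (intro psubset_card_mono) auto

lemma bij_betw_pick:
  assumes "finite S"
  shows "bij_betw (pick S) {..<card S} S"
proof (rule bij_betw_imageI)
  show "inj_on (pick S) {..<card S}"
    by (rule inj_onI) (metis lessThan_iff nat_neq_iff pick_mono)
  show "pick S ` {..<card S} = S"
  proof
    show "pick S ` {..<card S} \<subseteq> S" using pick_in_set by auto
    show "S \<subseteq> pick S ` {..<card S}"
    proof
      fix i assume "i \<in> S"
      then show "i \<in> pick S ` {..<card S}"
        using pick_card_in_set[of i S, symmetric] card_less_in_set_less_card[OF assms]
        by (intro image_eqI) auto
    qed
  qed
qed

(* pick J c is the c-th smallest element of J, so restrict_vec J x lists the entries of x
   on J in the order in which submatrix indexes them. *)
definition restrict_vec :: "nat set \<Rightarrow> 'a vec \<Rightarrow> 'a vec" where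
  "restrict_vec J x = vec (card J) (\<lambda>c. x $ pick J c)"

definition extend_vec :: "nat \<Rightarrow> nat set \<Rightarrow> 'a :: zero vec \<Rightarrow> 'a vec" where
  "extend_vec n J v = vec n (\<lambda>j. if j \<in> J then v $ card {a \<in> J. a < j} else 0)"

lemma restrict_extend_vec:
  assumes "J \<subseteq> {..<n}" "v \<in> carrier_vec (card J)"
  shows "restrict_vec J (extend_vec n J v) = v"
proof (rule eq_vecI)
  fix c assume "c < dim_vec v"
  then have "c < card J" using assms(2) by simp
  then have "pick J c \<in> J" "card {a \<in> J. a < pick J c} = c"
    using pick_in_set card_pick by auto
  then show "restrict_vec J (extend_vec n J v) $ c = v $ c"
    using assms(1) \<open>c < card J\<close> unfolding restrict_vec_def extend_vec_def by auto
qed (use assms(2) in \<open>simp add: restrict_vec_def\<close>)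

lemma restrict_vec_eq_0_iff:
  assumes "finite J"
  shows "restrict_vec J x = 0\<^sub>v (card J) \<longleftrightarrow> (\<forall>j \<in> J. x $ j = 0)"
proof
  assume x0: "restrict_vec J x = 0\<^sub>v (card J)"
  show "\<forall>j \<in> J. x $ j = 0"
  proof
    fix j assume "j \<in> J"
    then have "card {a \<in> J. a < j} < card J" "pick J (card {a \<in> J. a < j}) = j"
      using card_less_in_set_less_card[OF assms] pick_card_in_set by auto
    then show "x $ j = 0"
      using arg_cong[OF x0, of "\<lambda>w. w $ card {a \<in> J. a < j}"]
      unfolding restrict_vec_def by simp
  qed
next
  assume "\<forall>j \<in> J. x $ j = 0"
  then show "restrict_vec J x = 0\<^sub>v (card J)"
    unfolding restrict_vec_def using pick_in_set by (intro eq_vecI) auto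
qed

lemma submatrix_mult_restrict_vec:
  assumes A: "A \<in> carrier_mat m n" and I: "I \<subseteq> {..<m}" and J: "J \<subseteq> {..<n}"
    and x: "x \<in> carrier_vec n" and supp: "\<forall>j < n. j \<notin> J \<longrightarrow> x $ j = 0"
  shows "submatrix A I J *\<^sub>v restrict_vec J x = restrict_vec I (A *\<^sub>v x)"
proof (rule eq_vecI)
  have AIJ: "submatrix A I J \<in> carrier_mat (card I) (card J)"
    using submatrix_carrier_mat[OF A I J] .
  fix a assume "a < dim_vec (restrict_vec I (A *\<^sub>v x))"
  then have a: "a < card I" by (simp add: restrict_vec_def)
  then have "pick I a < m" using I pick_in_set by auto
  have "(submatrix A I J *\<^sub>v restrict_vec J x) $ a
      = (\<Sum>c<card J. A $$ (pick I a, pick J c) * x $ pick J c)"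
    using AIJ a submatrix_index_pick[OF A I J a]
    by (simp add: scalar_prod_def restrict_vec_def atLeast0LessThan)
  also have "\<dots> = (\<Sum>j\<in>J. A $$ (pick I a, j) * x $ j)"
    using sum.reindex_bij_betw[OF bij_betw_pick[OF finite_subset[OF J]]] by simp
  also have "\<dots> = (\<Sum>j<n. A $$ (pick I a, j) * x $ j)"
    using J supp by (intro sum.mono_neutral_left) auto
  also have "\<dots> = restrict_vec I (A *\<^sub>v x) $ a"
    using A x a \<open>pick I a < m\<close>
    by (simp add: restrict_vec_def scalar_prod_def atLeast0LessThan)
  finally show "(submatrix A I J *\<^sub>v restrict_vec J x) $ a = restrict_vec I (A *\<^sub>v x) $ a" .
qed (use submatrix_carrier_mat[OF A I J] in \<open>simp add: restrict_vec_def\<close>)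

lemma complementary_submatrix_invertible:
  fixes M N :: "'a :: field mat"
  assumes M: "M \<in> carrier_mat n n" and N: "N \<in> carrier_mat n n" and MN: "M * N = 1\<^sub>m n"
    and I: "I \<subseteq> {..<n}" and J: "J \<subseteq> {..<n}" and card_IJ: "card I = card J"
    and inv: "invertible_mat (submatrix M ({..<n} - J) ({..<n} - I))"
  shows "invertible_mat (submatrix N I J)"
proof -
  define I' where "I' = {..<n} - I"
  define J' where "J' = {..<n} - J"
  have I': "I' \<subseteq> {..<n}" and J': "J' \<subseteq> {..<n}" unfolding I'_def J'_def by auto
  have "card J' = card I'"
    using I J card_IJ unfolding I'_def J'_def by (simp add: card_Diff_subset finite_subset)
  then have M_J'I': "submatrix M J' I' \<in> carrier_mat (card I') (card I')"
    using submatrix_carrier_mat[OF M J' I'] by simp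
  have N_IJ: "submatrix N I J \<in> carrier_mat (card J) (card J)"
    using submatrix_carrier_mat[OF N I J] card_IJ by simp
  show ?thesis
    unfolding invertible_mat_iff_trivial_kernel[OF N_IJ]
  proof (intro ballI impI)
    fix v assume v: "v \<in> carrier_vec (card J)" and "submatrix N I J *\<^sub>v v = 0\<^sub>v (card J)"
    define x where "x = extend_vec n J v"
    define y where "y = N *\<^sub>v x"
    have x: "x \<in> carrier_vec n" and x_supp: "\<forall>j<n. j \<notin> J \<longrightarrow> x $ j = 0"
      unfolding x_def extend_vec_def by auto
    have y: "y \<in> carrier_vec n" using N x unfolding y_def by auto
    have "restrict_vec I y = submatrix N I J *\<^sub>v v"
      using submatrix_mult_restrict_vec[OF N I J x x_supp] restrict_extend_vec[OF J v]
      unfolding x_def y_def by simp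
    then have "restrict_vec I y = 0\<^sub>v (card I)"
      using \<open>submatrix N I J *\<^sub>v v = 0\<^sub>v (card J)\<close> card_IJ by simp
    then have y_I: "\<forall>i \<in> I. y $ i = 0"
      using restrict_vec_eq_0_iff[OF finite_subset[OF I]] by blast
    have My: "M *\<^sub>v y = x"
      using x M N MN unfolding y_def by (simp add: assoc_mult_mat_vec[symmetric])
    have "submatrix M J' I' *\<^sub>v restrict_vec I' y = restrict_vec J' x"
      using submatrix_mult_restrict_vec[OF M J' I' y] y_I My unfolding I'_def by auto
    also have "\<dots> = 0\<^sub>v (card J')"
      using x_supp restrict_vec_eq_0_iff[OF finite_subset[OF J']] unfolding J'_def by auto
    finally have "restrict_vec I' y = 0\<^sub>v (card I')"
      using inv invertible_mat_iff_trivial_kernel[OF M_J'I'] \<open>card J' = card I'\<close>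
      unfolding I'_def J'_def by (simp add: restrict_vec_def)
    then have "y = 0\<^sub>v n"
      using y y_I restrict_vec_eq_0_iff[OF finite_subset[OF I']] unfolding I'_def
      by (intro eq_vecI) auto
    then have "x = 0\<^sub>v n" using My M by (auto intro!: eq_vecI)
    then show "v = 0\<^sub>v (card J)"
      using restrict_extend_vec[OF J v] restrict_vec_eq_0_iff[OF finite_subset[OF J], of x] J
      unfolding x_def by auto
  qed
qed

theorem theorem2p24:
  fixes M Minv :: "'a :: {field, finite} mat" and s t :: nat
  assumes "t \<le> s"
    and "M \<in> carrier_mat s s" and "Minv \<in> carrier_mat s s"
    and "M * Minv = 1\<^sub>m s" and "Minv * M = 1\<^sub>m s"
    and "linear_AONT t s M"
  shows "linear_AONT (s - t) s Minv"
proof -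
  have "inverts_mat Minv M" "inverts_mat M Minv"
    using assms(2-5) unfolding inverts_mat_def by simp_all
  then have "invertible_mat Minv"
    using assms(3) unfolding invertible_mat_def by auto
  moreover have "invertible_mat (submatrix Minv I J)"
    if I: "I \<subseteq> {..<s}" and J: "J \<subseteq> {..<s}"
      and card_I: "card I = s - t" and card_J: "card J = s - t" for I J
  proof -
    have "card ({..<s} - J) = t" "card ({..<s} - I) = t"
      using card_Diff_subset[OF finite_subset[OF J finite_lessThan] J]
        card_Diff_subset[OF finite_subset[OF I finite_lessThan] I] card_I card_J assms(1)
      by simp_all
    then have "invertible_mat (submatrix M ({..<s} - J) ({..<s} - I))"
      using assms(6) unfolding linear_AONT_def by simp
    moreover have "card I = card J" using card_I card_J by simp
    ultimately show ?thesis
      using complementary_submatrix_invertible[OF assms(2-4) I J] by blast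
  qed
  ultimately show ?thesis
    using assms(3) unfolding linear_AONT_def by blast
qed

end
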